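(* Fix $\delta>0$ and let $T:\mathbb{N}\to\mathbb{N}_{\ge1}$ be a query budget depending on the dimension $d$. (1) If $\ln T(d)=o(d)$ as $d\to\infty$, then $\mathsf{ExcessErr}_d(T(d),\delta)\to+\infty$ as $d\to\infty$. (2) If $\ln T(d)/d\to+\infty$ as $d\to\infty$, then $\mathsf{ExcessErr}_d(T(d),\delta)\to 0$ as $d\to\infty$.
   Context: Linear reconstruction game: fix $d\ge 1$, a number of rounds $T\ge 0$ and a noise level $\delta>0$. An adversary holds a secret point $x^*\in\mathbb{R}^d$. In each round $t=1,\dots,T$ the reconstructor chooses a unit vector $v_t\in S^{d-1}$ (possibly adaptively, as a function of previous answers) and the adversary returns a real number $r_t$ with $|r_t-\langle x^*,v_t\rangle|\le\delta$. After $T$ rounds the reconstructor outputs $\hat x_T\in\mathbb{R}^d$. All strategies are deterministic. The optimal reconstruction error is $\mathrm{OPT}_d(T,\delta)=\inf_{\mathcal R}\sup_{x^*\in\mathbb{R}^d}\sup_{\mathcal A}\|\hat x_T-x^*\|_2$, where $\mathcal R$ ranges over reconstructor strategies for $T$ rounds and $\mathcal A$ over adversary answer strategies satisfying the noise constraint for the secret $x^*$. This quantity is nonincreasing in $T$; set $\mathrm{OPT}_d(\infty,\delta):=\lim_{T\to\infty}\mathrm{OPT}_d(T,\delta)$ and $\mathsf{ExcessErr}_d(T,\delta):=\mathrm{OPT}_d(T,\delta)-\mathrm{OPT}_d(\infty,\delta)$. *)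

theory Defs
  imports "HOL-Analysis.Analysis" "HOL-Library.Landau_Symbols"
begin

text \<open>Points of R^d are represented as functions nat => real vanishing outside {..<d}.\<close>

definition vecs :: "nat \<Rightarrow> (nat \<Rightarrow> real) set" where
  "vecs d = {x. \<forall>i\<ge>d. x i = 0}"

definition ip :: "nat \<Rightarrow> (nat \<Rightarrow> real) \<Rightarrow> (nat \<Rightarrow> real) \<Rightarrow> real" where
  "ip d x y = (\<Sum>i<d. x i * y i)"

definition nrm :: "nat \<Rightarrow> (nat \<Rightarrow> real) \<Rightarrow> real" where
  "nrm d x = sqrt (ip d x x)"

definition usphere :: "nat \<Rightarrow> (nat \<Rightarrow> real) set" where
  "usphere d = {v \<in> vecs d. ip d v v = 1}"

text \<open>A deterministic adaptive reconstructor: the query in round t+1 is q applied to the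
  list of the first t answers; the output is out applied to the list of all T answers.\<close>

definition valid_recon :: "nat \<Rightarrow> (real list \<Rightarrow> (nat \<Rightarrow> real)) \<Rightarrow> (real list \<Rightarrow> (nat \<Rightarrow> real)) \<Rightarrow> bool" where
  "valid_recon d q out \<longleftrightarrow> (\<forall>rs. q rs \<in> usphere d) \<and> (\<forall>rs. out rs \<in> vecs d)"

definition consistent :: "nat \<Rightarrow> nat \<Rightarrow> real \<Rightarrow> (real list \<Rightarrow> (nat \<Rightarrow> real)) \<Rightarrow> (nat \<Rightarrow> real) \<Rightarrow> real list \<Rightarrow> bool" where
  "consistent d T \<delta> q x rs \<longleftrightarrow> length rs = T \<and>
     (\<forall>t<T. \<bar>rs ! t - ip d x (q (take t rs))\<bar> \<le> \<delta>)"

definition err :: "nat \<Rightarrow> nat \<Rightarrow> real \<Rightarrow> (real list \<Rightarrow> (nat \<Rightarrow> real)) \<Rightarrow> (real list \<Rightarrow> (nat \<Rightarrow> real)) \<Rightarrow> ereal" where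
  "err d T \<delta> q out =
     (SUP x\<in>vecs d. SUP rs\<in>{rs. consistent d T \<delta> q x rs}. ereal (nrm d (out rs - x)))"

definition OPT :: "nat \<Rightarrow> nat \<Rightarrow> real \<Rightarrow> ereal" where
  "OPT d T \<delta> = (INF qo\<in>{(q, out). valid_recon d q out}. err d T \<delta> (fst qo) (snd qo))"

definition OPT_inf :: "nat \<Rightarrow> real \<Rightarrow> ereal" where
  "OPT_inf d \<delta> = lim (\<lambda>T. OPT d T \<delta>)"

definition ExcessErr :: "nat \<Rightarrow> nat \<Rightarrow> real \<Rightarrow> ereal" where
  "ExcessErr d T \<delta> = OPT d T \<delta> - OPT_inf d \<delta>"

end

theory Submission
  imports Defs "HOL-Probability.Hoeffding" "HOL-Real_Asymp.Real_Asymp"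
begin

text \<open>
  Answering 0 to every query fools a reconstructor with T queries: if
  2 T exp (-a^2/2) < 1, a Chernoff bound over the 2^d sign vectors yields \<sigma> with
  |\<langle>\<sigma>, v\<rangle>| < a for all queries v, and the two secrets \<plusminus>\<delta> \<sigma> / a are both consistent,
  so OPT_d(T) \<ge> \<delta> sqrt d / a, which is about \<delta> sqrt (d / (2 ln T)). Independently of T, an
  adversary answering with midranges stays consistent with all vertices sqrt 2 \<delta> e_i, so that
  OPT_d(\<infinity>) \<ge> sqrt 2 \<delta> sqrt (1 - 1/d).

  Asking all vectors of a \<rho>-norming set N (every z satisfies |z| \<le> \<rho> |\<langle>z, v\<rangle>|
  for some v \<in> N) confines the consistent secrets to a set of diameter 2 \<rho> \<delta>, and an
  approximate Jung theorem provides a point within sqrt 2 \<rho> \<delta> of all of them. The normalised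
  integer vectors of norm at most (m + 1) sqrt d form such a set with \<rho> = (2 m + 1) / (2 m - 1)
  and at most (2^((m+1)^2) 4)^d elements.

  So OPT_d(\<infinity>) lies between sqrt 2 \<delta> sqrt (1 - 1/d) and 3 sqrt 2 \<delta>; the excess error tends
  to \<infinity> when ln T = o(d), and it is at most sqrt 2 \<delta> (\<rho> - sqrt (1 - 1/d)) once
  T \<ge> (2^((m+1)^2) 4)^d, which tends to 0 when ln T / d \<rightarrow> \<infinity>.
\<close>

lemma ip_commute: "ip d x y = ip d y x"
  unfolding ip_def by (simp add: mult.commute)

lemma ip_add_left: "ip d (\<lambda>i. x i + y i) z = ip d x z + ip d y z"
  unfolding ip_def by (simp add: algebra_simps sum.distrib)

lemma ip_add_right: "ip d z (\<lambda>i. x i + y i) = ip d z x + ip d z y"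
  unfolding ip_def by (simp add: algebra_simps sum.distrib)

lemma ip_diff_left: "ip d (x - y) z = ip d x z - ip d y z"
  unfolding ip_def by (simp add: algebra_simps sum_subtractf)

lemma ip_diff_right: "ip d z (x - y) = ip d z x - ip d z y"
  unfolding ip_def by (simp add: algebra_simps sum_subtractf)

lemma ip_scale_left: "ip d (\<lambda>i. c * x i) z = c * ip d x z"
  unfolding ip_def by (simp add: algebra_simps sum_distrib_left)

lemma ip_scale_right: "ip d z (\<lambda>i. c * x i) = c * ip d z x"
  unfolding ip_def by (simp add: algebra_simps sum_distrib_left)

lemma ip_sum_left: "ip d (\<lambda>i. \<Sum>j\<in>A. p j i) z = (\<Sum>j\<in>A. ip d (p j) z)"
  unfolding ip_def by (simp add: sum_distrib_right sum.swap[of _ A])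

lemma ip_sum_right: "ip d z (\<lambda>i. \<Sum>j\<in>A. p j i) = (\<Sum>j\<in>A. ip d z (p j))"
  using ip_sum_left[of d p A z] by (simp add: ip_commute)

lemma ip_self_eq_sum_squares: "ip d x x = (\<Sum>i<d. (x i)\<^sup>2)"
  unfolding ip_def by (simp add: power2_eq_square)

lemma ip_self_nonneg: "ip d x x \<ge> 0"
  unfolding ip_self_eq_sum_squares by (intro sum_nonneg) auto

lemma nrm_nonneg: "nrm d x \<ge> 0"
  unfolding nrm_def using ip_self_nonneg by simp

lemma nrm_power2: "(nrm d x)\<^sup>2 = ip d x x"
  unfolding nrm_def using ip_self_nonneg[of d x] by simp

lemma nrm_le_iff_ip_self_le: "r \<ge> 0 \<Longrightarrow> nrm d x \<le> r \<longleftrightarrow> ip d x x \<le> r\<^sup>2"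
  unfolding nrm_def using ip_self_nonneg[of d x] by (metis real_le_lsqrt real_sqrt_le_iff real_sqrt_unique)

lemma nrm_eq_L2_set: "nrm d x = L2_set x {..<d}"
  by (simp add: nrm_def ip_def L2_set_def power2_eq_square)

lemma abs_ip_le_nrm_mult: "\<bar>ip d x y\<bar> \<le> nrm d x * nrm d y"
proof -
  have "\<bar>ip d x y\<bar> \<le> (\<Sum>i<d. \<bar>x i\<bar> * \<bar>y i\<bar>)"
    unfolding ip_def by (rule order_trans[OF sum_abs]) (simp add: abs_mult)
  also have "\<dots> \<le> nrm d x * nrm d y"
    unfolding nrm_eq_L2_set by (rule L2_set_mult_ineq)
  finally show ?thesis .
qed

lemma ip_diff_self_commute: "ip d (x - y) (x - y) = ip d (y - x) (y - x)"
  by (simp add: ip_diff_left ip_diff_right ip_commute)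

lemma vecs_diff: "x \<in> vecs d \<Longrightarrow> y \<in> vecs d \<Longrightarrow> x - y \<in> vecs d"
  unfolding vecs_def by auto

lemma ip_diff_scale_self:
  "ip d (x - (\<lambda>i. c * y i)) (x - (\<lambda>i. c * y i)) = ip d x x - 2 * c * ip d y x + c\<^sup>2 * ip d y y"
  unfolding ip_diff_left ip_diff_right ip_scale_left ip_scale_right
  by (simp add: ip_commute[of d x y] power2_eq_square algebra_simps)

lemma nrm_scale: "nrm d (\<lambda>i. c * x i) = \<bar>c\<bar> * nrm d x"
  unfolding nrm_def ip_scale_left ip_scale_right by (metis mult.assoc real_sqrt_mult real_sqrt_mult_self)

lemma nrm_le_of_close: "nrm d (g - y) \<le> r \<Longrightarrow> nrm d g \<le> nrm d y + r"
  using L2_set_triangle_ineq[of y "g - y" "{..<d}"] by (simp add: nrm_eq_L2_set)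

lemma ip_ge_of_close: "nrm d (g - y) \<le> r \<Longrightarrow> nrm d y * (nrm d y - r) \<le> ip d y g"
proof -
  assume close: "nrm d (g - y) \<le> r"
  have "- ip d y (g - y) \<le> nrm d y * nrm d (g - y)"
    using abs_ip_le_nrm_mult[of d y "g - y"] by linarith
  also have "\<dots> \<le> nrm d y * r"
    using close by (intro mult_left_mono nrm_nonneg)
  finally show ?thesis
    by (simp add: ip_diff_right right_diff_distrib nrm_power2[symmetric] power2_eq_square)
qed

lemma norming_ratio_of_close:
  assumes close: "nrm d (g - y) \<le> r" and r: "0 \<le> r" "r < nrm d y"
  shows "0 < ip d y g" "nrm d y * nrm d g \<le> (nrm d y + r) / (nrm d y - r) * ip d y g"
proof -
  have ip: "nrm d y * (nrm d y - r) \<le> ip d y g"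
    using close by (rule ip_ge_of_close)
  then show "0 < ip d y g"
    using r by (smt (verit) mult_pos_pos)
  have "(nrm d y - r) * (nrm d y * nrm d g) \<le> (nrm d y - r) * (nrm d y * (nrm d y + r))"
    using close r nrm_le_of_close[OF close] by (intro mult_left_mono) (auto intro: nrm_nonneg)
  also have "\<dots> = (nrm d y + r) * (nrm d y * (nrm d y - r))"
    by (simp add: algebra_simps)
  also have "\<dots> \<le> (nrm d y + r) * ip d y g"
    using ip r by (intro mult_left_mono) auto
  finally show "nrm d y * nrm d g \<le> (nrm d y + r) / (nrm d y - r) * ip d y g"
    using r by (simp add: field_simps mult.commute)
qed

lemma nrm_pos_of_ip_pos: "0 < ip d y g \<Longrightarrow> 0 < nrm d g"
  using abs_ip_le_nrm_mult[of d y g] nrm_nonneg[of d g] by (cases "nrm d g = 0") auto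

lemma normalize_in_usphere:
  assumes "x \<in> vecs d" "0 < nrm d x"
  shows "(\<lambda>i. (1 / nrm d x) * x i) \<in> usphere d"
proof -
  have "ip d (\<lambda>i. (1 / nrm d x) * x i) (\<lambda>i. (1 / nrm d x) * x i) = ip d x x / (nrm d x)\<^sup>2"
    unfolding ip_scale_left ip_scale_right by (simp add: power2_eq_square)
  also have "\<dots> = 1"
    using assms(2) by (simp flip: nrm_power2)
  finally show ?thesis
    using assms(1) by (simp add: usphere_def vecs_def)
qed

lemma consistent_take:
  "consistent d (Suc T) \<delta> q x rs \<Longrightarrow> consistent d T \<delta> q x (take T rs)"
  unfolding consistent_def by (auto simp: min_def)

lemma err_leI:
  assumes "\<And>x rs. x \<in> vecs d \<Longrightarrow> consistent d T \<delta> q x rs \<Longrightarrow> nrm d (out rs - x) \<le> B"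
  shows "err d T \<delta> q out \<le> ereal B"
  unfolding err_def using assms by (intro SUP_least) auto

lemma err_geI:
  assumes "x \<in> vecs d" and "consistent d T \<delta> q x rs"
  shows "ereal (nrm d (out rs - x)) \<le> err d T \<delta> q out"
  unfolding err_def using assms by (blast intro: SUP_upper2)

lemma OPT_geI:
  assumes "\<And>q out. valid_recon d q out \<Longrightarrow> L \<le> err d T \<delta> q out"
  shows "L \<le> OPT d T \<delta>"
  unfolding OPT_def using assms by (intro INF_greatest) auto

lemma OPT_le_err: "valid_recon d q out \<Longrightarrow> OPT d T \<delta> \<le> err d T \<delta> q out"
  unfolding OPT_def by (intro INF_lower2[of "(q, out)"]) auto

text \<open>A reconstructor for T rounds yields one for T+1 rounds that ignores the last answer.\<close>

lemma OPT_Suc_le: "OPT d (Suc T) \<delta> \<le> OPT d T \<delta>"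
proof (rule OPT_geI)
  fix q out assume valid: "valid_recon d q out"
  have "OPT d (Suc T) \<delta> \<le> err d (Suc T) \<delta> q (\<lambda>rs. out (take T rs))"
    using valid by (intro OPT_le_err) (auto simp: valid_recon_def)
  also have "\<dots> \<le> err d T \<delta> q out"
    unfolding err_def[of d "Suc T"]
    by (intro SUP_least) (auto intro: err_geI consistent_take)
  finally show "OPT d (Suc T) \<delta> \<le> err d T \<delta> q out" .
qed

lemma OPT_inf_eq_INF: "OPT_inf d \<delta> = (INF T. OPT d T \<delta>)"
proof -
  have "decseq (\<lambda>T. OPT d T \<delta>)"
    by (rule decseq_SucI) (rule OPT_Suc_le)
  then show ?thesis
    unfolding OPT_inf_def by (intro limI LIMSEQ_INF)
qed

lemma OPT_inf_le_OPT: "OPT_inf d \<delta> \<le> OPT d T \<delta>"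
  unfolding OPT_inf_eq_INF by (rule INF_lower) simp

lemma OPT_inf_geI: "(\<And>T. L \<le> OPT d T \<delta>) \<Longrightarrow> L \<le> OPT_inf d \<delta>"
  unfolding OPT_inf_eq_INF by (rule INF_greatest)

primrec transcript :: "((nat \<Rightarrow> real) \<Rightarrow> real) \<Rightarrow> (real list \<Rightarrow> (nat \<Rightarrow> real)) \<Rightarrow> nat \<Rightarrow> real list" where
  "transcript a q 0 = []"
| "transcript a q (Suc t) = transcript a q t @ [a (q (transcript a q t))]"

lemma length_transcript [simp]: "length (transcript a q t) = t"
  by (induction t) auto

lemma take_transcript: "t \<le> T \<Longrightarrow> take t (transcript a q T) = transcript a q t"
  by (induction T) (auto simp: le_Suc_eq)

lemma nth_transcript: "t < T \<Longrightarrow> transcript a q T ! t = a (q (transcript a q t))"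
  by (metis take_transcript Suc_leI nth_take lessI nth_append_length transcript.simps(2) length_transcript)

lemma err_ge_transcript:
  assumes "x \<in> vecs d"
    and "\<And>t. t < T \<Longrightarrow> \<bar>a (q (transcript a q t)) - ip d x (q (transcript a q t))\<bar> \<le> \<delta>"
  shows "ereal (nrm d (out (transcript a q T) - x)) \<le> err d T \<delta> q out"
  using assms by (intro err_geI) (auto simp: consistent_def nth_transcript take_transcript)

section \<open>Lower bound from a simplex of secrets\<close>

definition simplex_vertex :: "real \<Rightarrow> nat \<Rightarrow> nat \<Rightarrow> real" where
  "simplex_vertex \<delta> i = (\<lambda>j. if j = i then sqrt 2 * \<delta> else 0)"

lemma simplex_vertex_in_vecs: "i < d \<Longrightarrow> simplex_vertex \<delta> i \<in> vecs d"
  unfolding vecs_def simplex_vertex_def by auto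

lemma ip_simplex_vertex:
  assumes "i < d"
  shows "ip d (simplex_vertex \<delta> i) v = sqrt 2 * \<delta> * v i"
proof -
  have "(\<Sum>j<d. simplex_vertex \<delta> i j * v j) = (\<Sum>j<d. if j = i then sqrt 2 * \<delta> * v i else 0)"
    by (rule sum.cong) (auto simp: simplex_vertex_def)
  then show ?thesis
    unfolding ip_def using assms by simp
qed

lemma simplex_vertex_same [simp]: "simplex_vertex \<delta> i i = sqrt 2 * \<delta>"
  by (simp add: simplex_vertex_def)

lemma usphere_coord_diff_le:
  assumes v: "v \<in> usphere d" and "j < d" "k < d"
  shows "v j - v k \<le> sqrt 2"
proof (cases "j = k")
  case False
  have "(v j)\<^sup>2 + (v k)\<^sup>2 = (\<Sum>i\<in>{j, k}. (v i)\<^sup>2)"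
    using False by simp
  also have "\<dots> \<le> (\<Sum>i<d. (v i)\<^sup>2)"
    using \<open>j < d\<close> \<open>k < d\<close> by (intro sum_mono2) auto
  also have "\<dots> = 1"
    using v by (simp add: usphere_def ip_self_eq_sum_squares)
  finally have "(v j - v k)\<^sup>2 \<le> 2"
    by (smt (verit) zero_le_power2 power2_diff power2_sum)
  then show ?thesis
    by (metis real_le_rsqrt abs_le_D1 real_sqrt_abs real_sqrt_le_mono)
qed simp

text \<open>Answering a query v with the midpoint of the range of the coordinates of the scaled
  vector sqrt 2 * \<delta> * v is within \<delta> of the true answer for every simplex vertex, because
  the coordinates of a unit vector spread over an interval of length at most sqrt 2.\<close>

definition midrange_answer :: "nat \<Rightarrow> real \<Rightarrow> (nat \<Rightarrow> real) \<Rightarrow> real" where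
  "midrange_answer d \<delta> v = sqrt 2 * \<delta> * (Max (v ` {..<d}) + Min (v ` {..<d})) / 2"

lemma midrange_answer_consistent:
  assumes v: "v \<in> usphere d" and i: "i < d" and \<delta>: "\<delta> > 0"
  shows "\<bar>midrange_answer d \<delta> v - ip d (simplex_vertex \<delta> i) v\<bar> \<le> \<delta>"
proof -
  define M where "M = Max (v ` {..<d})"
  define m where "m = Min (v ` {..<d})"
  have "M \<in> v ` {..<d}" "m \<in> v ` {..<d}"
    unfolding M_def m_def using i by (auto intro!: Max_in Min_in)
  then have "M - m \<le> sqrt 2"
    using usphere_coord_diff_le[OF v] by auto
  moreover have "m \<le> v i" "v i \<le> M"
    unfolding M_def m_def using i by auto
  ultimately have close: "\<bar>(M + m) / 2 - v i\<bar> \<le> sqrt 2 / 2"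
    by (simp add: abs_le_iff field_simps)
  have "midrange_answer d \<delta> v - ip d (simplex_vertex \<delta> i) v = sqrt 2 * \<delta> * ((M + m) / 2 - v i)"
    unfolding midrange_answer_def ip_simplex_vertex[OF i] M_def m_def by (simp add: algebra_simps)
  then have "\<bar>midrange_answer d \<delta> v - ip d (simplex_vertex \<delta> i) v\<bar> = sqrt 2 * \<delta> * \<bar>(M + m) / 2 - v i\<bar>"
    using \<delta> by (simp add: abs_mult)
  also have "\<dots> \<le> sqrt 2 * \<delta> * (sqrt 2 / 2)"
    using \<delta> close by (intro mult_left_mono) auto
  also have "\<dots> = \<delta>"
    by simp
  finally show ?thesis .
qed

lemma sum_dist_simplex_vertices_ge:
  "(\<Sum>i<d. ip d (c - simplex_vertex \<delta> i) (c - simplex_vertex \<delta> i)) \<ge> 2 * (real d - 1) * \<delta>\<^sup>2"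
proof -
  define s where "s = (\<Sum>i<d. c i)"
  have "ip d (c - simplex_vertex \<delta> i) (c - simplex_vertex \<delta> i) = ip d c c - 2 * sqrt 2 * \<delta> * c i + 2 * \<delta>\<^sup>2"
    if "i < d" for i
    using that by (simp add: ip_diff_left ip_diff_right ip_commute[of d c "simplex_vertex \<delta> i"]
        ip_simplex_vertex power2_eq_square)
  then have "(\<Sum>i<d. ip d (c - simplex_vertex \<delta> i) (c - simplex_vertex \<delta> i))
      = real d * ip d c c - 2 * sqrt 2 * \<delta> * s + 2 * real d * \<delta>\<^sup>2"
    by (simp add: s_def sum.distrib sum_subtractf sum_distrib_left)
  moreover have "s\<^sup>2 \<le> real d * ip d c c"
    using sum_squared_le_sum_of_squares[of c "{..<d}"]
    by (simp add: s_def ip_self_eq_sum_squares mult.commute)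
  moreover have "0 \<le> (s - sqrt 2 * \<delta>)\<^sup>2" by simp
  ultimately show ?thesis
    by (simp add: power2_diff power_mult_distrib algebra_simps)
qed

lemma exists_far_simplex_vertex:
  assumes "d \<ge> 1"
  shows "\<exists>i<d. 2 * \<delta>\<^sup>2 * (1 - 1 / d) \<le> ip d (c - simplex_vertex \<delta> i) (c - simplex_vertex \<delta> i)"
proof (rule ccontr)
  assume "\<not> ?thesis"
  then have "(\<Sum>i<d. ip d (c - simplex_vertex \<delta> i) (c - simplex_vertex \<delta> i)) < (\<Sum>i<d. 2 * \<delta>\<^sup>2 * (1 - 1 / d))"
    using assms by (intro sum_strict_mono) (auto simp: not_le lessThan_empty_iff)
  also have "\<dots> = 2 * (real d - 1) * \<delta>\<^sup>2"
    using assms by (simp add: field_simps)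
  finally show False
    using sum_dist_simplex_vertices_ge[where d = d and c = c and \<delta> = \<delta>] by linarith
qed

lemma OPT_ge_simplex:
  assumes d: "d \<ge> 1" and \<delta>: "\<delta> > 0"
  shows "ereal (sqrt (2 * \<delta>\<^sup>2 * (1 - 1 / d))) \<le> OPT d T \<delta>"
proof (rule OPT_geI)
  fix q out assume valid: "valid_recon d q out"
  define c where "c = out (transcript (midrange_answer d \<delta>) q T)"
  obtain i where i: "i < d"
    and far: "2 * \<delta>\<^sup>2 * (1 - 1 / d) \<le> ip d (c - simplex_vertex \<delta> i) (c - simplex_vertex \<delta> i)"
    using exists_far_simplex_vertex[OF d] by blast
  have "sqrt (2 * \<delta>\<^sup>2 * (1 - 1 / d)) \<le> nrm d (c - simplex_vertex \<delta> i)"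
    unfolding nrm_def using far by simp
  also have "ereal (nrm d (c - simplex_vertex \<delta> i)) \<le> err d T \<delta> q out"
    unfolding c_def using valid i \<delta>
    by (intro err_ge_transcript simplex_vertex_in_vecs midrange_answer_consistent)
      (auto simp: valid_recon_def)
  finally show "ereal (sqrt (2 * \<delta>\<^sup>2 * (1 - 1 / d))) \<le> err d T \<delta> q out"
    by simp
qed

section \<open>Lower bound from random signs\<close>

lemma exp_add_exp_minus_le:
  fixes x :: real
  shows "exp x + exp (-x) \<le> 2 * exp (x\<^sup>2 / 2)"
proof -
  have "exp y + exp (-y) \<le> 2 * exp (y\<^sup>2 / 2)" if "y \<ge> 0" for y :: real
  proof -
    have "-(2 * y) * (1 / 2) + ln (1 + (1 / 2) * (exp (2 * y) - 1)) \<le> (2 * y)\<^sup>2 / 8"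
      by (rule Hoeffdings_lemma_aux) (use that in auto)
    then have "ln ((1 + exp (2 * y)) / 2) \<le> y + y\<^sup>2 / 2"
      by (simp add: power2_eq_square field_simps)
    then have "(1 + exp (2 * y)) / 2 \<le> exp (y + y\<^sup>2 / 2)"
      by (smt (verit) exp_gt_zero exp_le_cancel_iff exp_ln)
    then have "exp (-y) * ((1 + exp (2 * y)) / 2) \<le> exp (-y) * exp (y + y\<^sup>2 / 2)"
      by (intro mult_left_mono) auto
    then show ?thesis
      by (simp add: field_simps flip: exp_add)
  qed
  from this[of x] this[of "-x"] show ?thesis
    by (cases "x \<ge> 0") (simp_all add: add.commute)
qed

lemma card_signs_correlation_ge_le:
  fixes v :: "nat \<Rightarrow> real"
  assumes v: "(\<Sum>i<d. (v i)\<^sup>2) = 1" and a: "a > 0"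
  shows "real (card {\<sigma> \<in> PiE {..<d} (\<lambda>_. {-1, 1}). (\<Sum>i<d. \<sigma> i * v i) \<ge> a})
    \<le> 2 ^ d * exp (-(a\<^sup>2) / 2)"
proof -
  define P where "P = PiE {..<d} (\<lambda>_. {-1, 1::real})"
  define B where "B = {\<sigma> \<in> P. (\<Sum>i<d. \<sigma> i * v i) \<ge> a}"
  have "finite P"
    unfolding P_def by (intro finite_PiE) auto
  have "real (card B) * exp (a\<^sup>2) = (\<Sum>\<sigma>\<in>B. exp (a * a))"
    by (simp add: power2_eq_square)
  also have "\<dots> \<le> (\<Sum>\<sigma>\<in>B. exp (a * (\<Sum>i<d. \<sigma> i * v i)))"
    using a by (intro sum_mono) (auto simp: B_def)
  also have "\<dots> \<le> (\<Sum>\<sigma>\<in>P. exp (a * (\<Sum>i<d. \<sigma> i * v i)))"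
    using \<open>finite P\<close> by (intro sum_mono2) (auto simp: B_def)
  also have "\<dots> = (\<Sum>\<sigma>\<in>P. \<Prod>i<d. exp (a * v i * \<sigma> i))"
    by (simp add: sum_distrib_left exp_sum mult_ac)
  also have "\<dots> = (\<Prod>i<d. \<Sum>s\<in>{-1, 1}. exp (a * v i * s))"
    unfolding P_def by (rule prod_sum_PiE[symmetric]) auto
  also have "\<dots> \<le> (\<Prod>i<d. 2 * exp ((a * v i)\<^sup>2 / 2))"
    using exp_add_exp_minus_le by (intro prod_mono) (auto simp: add.commute add_nonneg_nonneg)
  also have "\<dots> = 2 ^ d * exp (\<Sum>i<d. a\<^sup>2 * (v i)\<^sup>2 / 2)"
    by (simp add: prod.distrib exp_sum power_mult_distrib)
  also have "(\<Sum>i<d. a\<^sup>2 * (v i)\<^sup>2 / 2) = a\<^sup>2 / 2"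
    using v by (simp flip: sum_divide_distrib sum_distrib_left)
  finally have "real (card B) \<le> 2 ^ d * exp (a\<^sup>2 / 2) / exp (a\<^sup>2)"
    by (simp add: field_simps)
  also have "\<dots> = 2 ^ d * exp (-(a\<^sup>2) / 2)"
    by (simp add: field_simps flip: exp_add)
  finally show ?thesis
    unfolding B_def P_def .
qed

lemma card_signs_abs_correlation_ge_le:
  fixes v :: "nat \<Rightarrow> real"
  assumes v: "(\<Sum>i<d. (v i)\<^sup>2) = 1" and a: "a > 0"
  shows "real (card {\<sigma> \<in> PiE {..<d} (\<lambda>_. {-1, 1}). \<bar>\<Sum>i<d. \<sigma> i * v i\<bar> \<ge> a})
    \<le> 2 * (2 ^ d * exp (-(a\<^sup>2) / 2))"
proof -
  define P where "P = PiE {..<d} (\<lambda>_. {-1, 1::real})"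
  define B where "B = (\<lambda>w. {\<sigma> \<in> P. (\<Sum>i<d. \<sigma> i * w i) \<ge> a})"
  have "finite P"
    unfolding P_def by (intro finite_PiE) auto
  have "{\<sigma> \<in> P. \<bar>\<Sum>i<d. \<sigma> i * v i\<bar> \<ge> a} = B v \<union> B (\<lambda>i. - v i)"
    unfolding B_def by (auto simp: sum_negf abs_le_iff)
  then have "card {\<sigma> \<in> P. \<bar>\<Sum>i<d. \<sigma> i * v i\<bar> \<ge> a} \<le> card (B v) + card (B (\<lambda>i. - v i))"
    by (simp add: card_Un_le)
  moreover have "real (card (B w)) \<le> 2 ^ d * exp (-(a\<^sup>2) / 2)" if "w = v \<or> w = (\<lambda>i. - v i)" for w
    unfolding B_def P_def using that v a by (intro card_signs_correlation_ge_le) auto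
  ultimately show ?thesis
    unfolding P_def by (smt (verit) of_nat_add of_nat_mono)
qed

text \<open>Union bound over the T events that a uniformly random sign vector is
  correlated by at least a with one of the queries.\<close>

lemma exists_signs_small_correlations:
  fixes v :: "nat \<Rightarrow> nat \<Rightarrow> real"
  assumes v: "\<And>t. t < T \<Longrightarrow> (\<Sum>i<d. (v t i)\<^sup>2) = 1" and a: "a > 0"
    and small: "2 * real T * exp (-(a\<^sup>2) / 2) < 1"
  shows "\<exists>\<sigma> \<in> PiE {..<d} (\<lambda>_. {-1, 1}). \<forall>t<T. \<bar>\<Sum>i<d. \<sigma> i * v t i\<bar> < a"
proof -
  define P where "P = PiE {..<d} (\<lambda>_. {-1, 1::real})"
  define Bad where "Bad = (\<Union>t<T. {\<sigma> \<in> P. \<bar>\<Sum>i<d. \<sigma> i * v t i\<bar> \<ge> a})"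
  have "card Bad \<le> (\<Sum>t<T. card {\<sigma> \<in> P. \<bar>\<Sum>i<d. \<sigma> i * v t i\<bar> \<ge> a})"
    unfolding Bad_def by (rule card_UN_le) simp
  then have "real (card Bad) \<le> (\<Sum>t<T. real (card {\<sigma> \<in> P. \<bar>\<Sum>i<d. \<sigma> i * v t i\<bar> \<ge> a}))"
    by (simp flip: of_nat_sum)
  also have "\<dots> \<le> (\<Sum>t<T. 2 * (2 ^ d * exp (-(a\<^sup>2) / 2)))"
    unfolding P_def using v a by (intro sum_mono card_signs_abs_correlation_ge_le) auto
  also have "\<dots> = 2 ^ d * (2 * real T * exp (-(a\<^sup>2) / 2))"
    by simp
  also have "\<dots> < 2 ^ d"
    using small by simp
  also have "\<dots> = real (card P)"
    unfolding P_def by (simp add: card_PiE)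
  finally have "card Bad < card P"
    by simp
  moreover have "Bad \<subseteq> P"
    unfolding Bad_def by auto
  ultimately have "\<not> P \<subseteq> Bad"
    by auto
  then show ?thesis
    unfolding P_def Bad_def by (fastforce simp: not_le)
qed

text \<open>If every query is nearly orthogonal to u, answering 0 throughout is consistent with
  both secrets R u and -R u, and by the parallelogram law the output is at distance at least R
  from one of them.\<close>

lemma err_ge_antipodal_secrets:
  assumes u: "u \<in> vecs d" "ip d u u = 1" and R: "R \<ge> 0"
    and orth: "\<And>t. t < T \<Longrightarrow> R * \<bar>ip d u (q (transcript (\<lambda>_. 0) q t))\<bar> \<le> \<delta>"
  shows "ereal R \<le> err d T \<delta> q out"
proof -
  define c where "c = out (transcript (\<lambda>_. 0) q T)"
  define x where "x = (\<lambda>s i. s * u i)"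
  have err: "ereal (nrm d (c - x s)) \<le> err d T \<delta> q out" if "\<bar>s\<bar> = R" for s
    unfolding c_def x_def using orth that u(1)
    by (intro err_ge_transcript) (auto simp: vecs_def ip_scale_left abs_mult)
  have "ip d (c - x s) (c - x s) = ip d c c - 2 * s * ip d u c + s\<^sup>2" for s
    by (simp add: x_def ip_diff_left ip_diff_right ip_scale_left ip_scale_right ip_commute[of d c u]
        u(2) power2_eq_square algebra_simps)
  then have "ip d (c - x R) (c - x R) + ip d (c - x (-R)) (c - x (-R)) = 2 * ip d c c + 2 * R\<^sup>2"
    by simp
  then have "R\<^sup>2 \<le> ip d (c - x R) (c - x R) \<or> R\<^sup>2 \<le> ip d (c - x (-R)) (c - x (-R))"
    using ip_self_nonneg[of d c] by linarith
  then have "R \<le> nrm d (c - x R) \<or> R \<le> nrm d (c - x (-R))"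
    using R by (metis nrm_power2 nrm_nonneg power2_le_imp_le)
  moreover have "ereal (nrm d (c - x R)) \<le> err d T \<delta> q out" "ereal (nrm d (c - x (-R))) \<le> err d T \<delta> q out"
    using err R by auto
  ultimately show ?thesis
    by (meson ereal_less_eq(3) order_trans)
qed

lemma OPT_ge_uncorrelated_signs:
  assumes d: "d \<ge> 1" and \<delta>: "\<delta> > 0" and a: "a > 0"
    and small: "2 * real T * exp (-(a\<^sup>2) / 2) < 1"
  shows "ereal (\<delta> * sqrt d / a) \<le> OPT d T \<delta>"
proof (rule OPT_geI)
  fix q out assume valid: "valid_recon d q out"
  define v where "v = (\<lambda>t. q (transcript (\<lambda>_. 0) q t))"
  have "(\<Sum>i<d. (v t i)\<^sup>2) = 1" for t
    using valid by (simp add: v_def valid_recon_def usphere_def ip_self_eq_sum_squares)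
  then obtain \<sigma> where \<sigma>: "\<sigma> \<in> PiE {..<d} (\<lambda>_. {-1, 1})"
    and corr: "\<And>t. t < T \<Longrightarrow> \<bar>\<Sum>i<d. \<sigma> i * v t i\<bar> < a"
    using exists_signs_small_correlations[OF _ a small] by blast
  define u where "u = (\<lambda>i. if i < d then \<sigma> i / sqrt d else 0)"
  have "u \<in> vecs d"
    unfolding u_def vecs_def by simp
  moreover have "ip d u u = 1"
  proof -
    have "\<sigma> i * \<sigma> i = 1" if "i < d" for i
      using \<sigma> that by (auto simp: PiE_def Pi_def)
    then have "ip d u u = (\<Sum>i<d. 1 / d)"
      unfolding ip_def u_def by (intro sum.cong) auto
    then show ?thesis
      using d by simp
  qed
  moreover have "\<delta> * sqrt d / a * \<bar>ip d u (v t)\<bar> \<le> \<delta>" if "t < T" for t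
  proof -
    have "ip d u (v t) = (\<Sum>i<d. \<sigma> i * v t i) / sqrt d"
      unfolding ip_def u_def by (simp add: sum_divide_distrib)
    then have "\<delta> * sqrt d / a * \<bar>ip d u (v t)\<bar> = \<delta> * (\<bar>\<Sum>i<d. \<sigma> i * v t i\<bar> / a)"
      using d by (simp add: abs_mult)
    also have "\<dots> \<le> \<delta> * 1"
      using corr[OF that] a \<delta> by (intro mult_left_mono) auto
    finally show ?thesis
      by simp
  qed
  ultimately show "ereal (\<delta> * sqrt d / a) \<le> err d T \<delta> q out"
    using \<delta> a by (intro err_ge_antipodal_secrets) (auto simp: v_def)
qed

lemma OPT_ge_few_queries:
  assumes d: "d \<ge> 1" and \<delta>: "\<delta> > 0" and T: "T \<ge> 1"
  shows "ereal (\<delta> * sqrt (d / (2 * ln (2 * real T) + 2))) \<le> OPT d T \<delta>"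
proof -
  define a where "a = sqrt (2 * ln (2 * real T) + 2)"
  have "ln (2 * real T) \<ge> 0"
    using T by simp
  then have a2: "a\<^sup>2 = 2 * ln (2 * real T) + 2" and "a > 0"
    unfolding a_def by simp_all
  have "-(a\<^sup>2) / 2 = -1 - ln (2 * real T)"
    by (simp add: a2)
  then have "2 * real T * exp (-(a\<^sup>2) / 2) = exp (-1)"
    using T by (simp add: exp_diff)
  then have "ereal (\<delta> * sqrt d / a) \<le> OPT d T \<delta>"
    using d \<delta> \<open>a > 0\<close> by (intro OPT_ge_uncorrelated_signs) auto
  then show ?thesis
    by (simp add: a_def real_sqrt_divide)
qed

section \<open>An approximate Jung theorem\<close>

definition centroid :: "nat \<Rightarrow> (nat \<Rightarrow> nat \<Rightarrow> real) \<Rightarrow> nat \<Rightarrow> real" where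
  "centroid n p = (\<lambda>i. (\<Sum>j<n. p j i) / n)"

definition scatter :: "nat \<Rightarrow> nat \<Rightarrow> (nat \<Rightarrow> nat \<Rightarrow> real) \<Rightarrow> real" where
  "scatter d n p = (\<Sum>j<n. ip d (p j - centroid n p) (p j - centroid n p))"

lemma scatter_eq:
  "scatter d n p = (\<Sum>j<n. ip d (p j) (p j)) - ip d (\<lambda>i. \<Sum>j<n. p j i) (\<lambda>i. \<Sum>j<n. p j i) / n"
proof -
  define S where "S = (\<lambda>i. \<Sum>j<n. p j i)"
  have c: "centroid n p = (\<lambda>i. (1 / n) * S i)"
    by (simp add: centroid_def S_def)
  have "scatter d n p = (\<Sum>j<n. ip d (p j) (p j) - 2 * (1 / n) * ip d S (p j) + (1 / n)\<^sup>2 * ip d S S)"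
    unfolding scatter_def c ip_diff_scale_self by (rule refl)
  also have "\<dots> = (\<Sum>j<n. ip d (p j) (p j)) - 2 * (1 / n) * ip d S S + n * (1 / n)\<^sup>2 * ip d S S"
    by (simp add: sum.distrib sum_subtractf S_def ip_sum_right flip: sum_distrib_left sum_divide_distrib)
  also have "\<dots> = (\<Sum>j<n. ip d (p j) (p j)) - ip d S S / n"
    by (simp add: power2_eq_square)
  finally show ?thesis
    by (simp add: S_def)
qed

lemma scatter_Suc:
  "scatter d (Suc n) p
    = scatter d n p + real n / (real n + 1) * ip d (p n - centroid n p) (p n - centroid n p)"
proof (cases "n = 0")
  case True
  then show ?thesis
    by (simp add: scatter_def centroid_def ip_def)
next
  case False
  define S where "S = (\<lambda>i. \<Sum>j<n. p j i)"
  define Q where "Q = (\<Sum>j<n. ip d (p j) (p j))"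
  define a where "a = ip d (p n) (p n)"
  define b where "b = ip d S (p n)"
  define e where "e = ip d S S"
  have S_Suc: "(\<lambda>i. \<Sum>j<Suc n. p j i) = (\<lambda>i. S i + p n i)"
    by (simp add: S_def)
  have scatter_Suc_n: "scatter d (Suc n) p = Q + a - (e + 2 * b + a) / (real n + 1)"
    unfolding scatter_eq S_Suc ip_add_left ip_add_right
    by (simp add: Q_def a_def b_def e_def ip_commute[of d "p n" S] ac_simps)
  have scatter_n: "scatter d n p = Q - e / n"
    by (simp add: scatter_eq Q_def e_def S_def)
  have c: "centroid n p = (\<lambda>i. (1 / n) * S i)"
    by (simp add: centroid_def S_def)
  have dist_n: "ip d (p n - centroid n p) (p n - centroid n p) = a - 2 * (1 / n) * b + (1 / n)\<^sup>2 * e"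
    unfolding c ip_diff_scale_self by (simp add: a_def b_def e_def)
  have "Q + a - (e + 2 * b + a) / (real n + 1)
      = Q - e / n + real n / (real n + 1) * (a - 2 * (1 / n) * b + (1 / n)\<^sup>2 * e)"
    using False by (simp add: divide_simps power2_eq_square) (simp add: algebra_simps)
  then show ?thesis
    unfolding scatter_Suc_n scatter_n dist_n .
qed

lemma scatter_eq_pairwise:
  "2 * real n * scatter d n p = (\<Sum>i<n. \<Sum>j<n. ip d (p i - p j) (p i - p j))"
proof -
  define Q where "Q = (\<Sum>j<n. ip d (p j) (p j))"
  have "(\<Sum>i<n. \<Sum>j<n. ip d (p i - p j) (p i - p j))
      = (\<Sum>i<n. \<Sum>j<n. ip d (p i) (p i) + ip d (p j) (p j) - 2 * ip d (p i) (p j))"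
    by (intro sum.cong refl) (simp add: ip_diff_left ip_diff_right ip_commute[of d "p j" "p i" for i j])
  also have "\<dots> = 2 * n * Q - 2 * (\<Sum>i<n. \<Sum>j<n. ip d (p i) (p j))"
    by (simp add: Q_def sum.distrib sum_subtractf sum_distrib_left mult.assoc)
  also have "(\<Sum>i<n. \<Sum>j<n. ip d (p i) (p j)) = ip d (\<lambda>i. \<Sum>j<n. p j i) (\<lambda>i. \<Sum>j<n. p j i)"
    by (simp add: ip_sum_left ip_sum_right)
  also have "2 * n * Q - 2 * \<dots> = 2 * real n * scatter d n p"
    by (cases "n = 0") (simp_all add: scatter_eq Q_def right_diff_distrib ip_def)
  finally show ?thesis ..
qed

lemma scatter_le_diameter:
  assumes "\<And>i j. i < n \<Longrightarrow> j < n \<Longrightarrow> ip d (p i - p j) (p i - p j) \<le> D"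
  shows "scatter d n p \<le> n * D / 2"
proof -
  have "2 * real n * scatter d n p \<le> (\<Sum>i<n. \<Sum>j<n. D)"
    unfolding scatter_eq_pairwise using assms by (intro sum_mono) auto
  then show ?thesis
    by (cases "n = 0") (simp_all add: scatter_def field_simps power2_eq_square)
qed

lemma inverse_le_sqrt_diff:
  fixes x :: real
  assumes "x \<ge> 0"
  shows "1 / (x + 1) \<le> 2 * (sqrt (x + 1) - sqrt x)"
proof -
  have "(sqrt (x + 1) - sqrt x) * (sqrt (x + 1) + sqrt x) = 1"
    using assms by (simp add: algebra_simps)
  moreover have "sqrt x \<le> sqrt (x + 1)"
    by simp
  moreover have "sqrt (x + 1) \<le> x + 1"
    using assms by (intro real_le_lsqrt) (auto simp: power2_eq_square)
  ultimately have "1 \<le> (sqrt (x + 1) - sqrt x) * (2 * (x + 1))"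
    by (smt (verit) mult_left_mono)
  then show ?thesis
    using assms by (simp add: field_simps)
qed

lemma scatter_ge_of_far_from_centroids:
  assumes far: "\<And>k. k < n \<Longrightarrow> A \<le> ip d (p k - centroid k p) (p k - centroid k p)" and "A \<ge> 0"
  shows "A * (n - 2 * sqrt n) \<le> scatter d n p"
  using far
proof (induction n)
  case 0
  then show ?case
    by (simp add: scatter_def)
next
  case (Suc n)
  have IH: "A * (n - 2 * sqrt n) \<le> scatter d n p"
    by (rule Suc.IH) (rule Suc.prems, simp)
  have "1 - 2 * (sqrt (real n + 1) - sqrt n) \<le> real n / (real n + 1)"
    using inverse_le_sqrt_diff[of n] by (simp add: field_simps)
  then have "A * (1 - 2 * (sqrt (real n + 1) - sqrt n)) \<le> A * (real n / (real n + 1))"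
    using \<open>A \<ge> 0\<close> by (rule mult_left_mono)
  also have "\<dots> \<le> ip d (p n - centroid n p) (p n - centroid n p) * (real n / (real n + 1))"
    using Suc.prems[OF lessI] by (rule mult_right_mono) simp
  finally show ?case
    using IH by (simp add: scatter_Suc algebra_simps)
qed

text \<open>The partial sums of a sequence of points in which every point is chosen by f from
  the centroid of its predecessors.\<close>

primrec greedy_sum :: "((nat \<Rightarrow> real) \<Rightarrow> (nat \<Rightarrow> real)) \<Rightarrow> nat \<Rightarrow> nat \<Rightarrow> real" where
  "greedy_sum f 0 = (\<lambda>i. 0)"
| "greedy_sum f (Suc n) = (\<lambda>i. greedy_sum f n i + f (\<lambda>k. greedy_sum f n k / n) i)"

lemma centroid_greedy_sum:
  fixes f :: "(nat \<Rightarrow> real) \<Rightarrow> (nat \<Rightarrow> real)"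
  defines "p \<equiv> \<lambda>n. f (\<lambda>k. greedy_sum f n k / n)"
  shows "centroid n p = (\<lambda>k. greedy_sum f n k / n)"
proof -
  have "greedy_sum f n = (\<lambda>i. \<Sum>j<n. p j i)"
    by (induction n) (simp_all add: p_def)
  then show ?thesis
    by (simp add: centroid_def)
qed

lemma exists_sqrt_lt_linear:
  assumes "\<eta> > 0" "c \<ge> 0"
  shows "\<exists>n :: nat. c * sqrt n < \<eta> * n"
proof -
  obtain n :: nat where "(c / \<eta>)\<^sup>2 < n"
    using reals_Archimedean2 by blast
  then have "c / \<eta> < sqrt n"
    by (simp add: real_less_rsqrt)
  moreover have "0 \<le> c / \<eta>"
    using assms by simp
  ultimately have "0 < sqrt n"
    by linarith
  have "c < \<eta> * sqrt n"
    using \<open>c / \<eta> < sqrt n\<close> assms(1) by (simp add: pos_divide_less_eq mult.commute)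
  then have "c * sqrt n < \<eta> * sqrt n * sqrt n"
    using \<open>0 < sqrt n\<close> by (rule mult_strict_right_mono)
  then show ?thesis
    by (auto simp: mult.assoc)
qed

text \<open>An approximate form of Jung's theorem with the dimension-free constant 1/2: if no point
  were within the claimed distance of all of K, the greedy sequence that always picks a point
  of K far from the current centroid would have scatter growing like n (D/2 + \<eta>), while
  diameter D caps the scatter at n D/2.\<close>

lemma exists_approx_center:
  assumes K: "K \<subseteq> vecs d" "K \<noteq> {}"
    and diam: "\<And>x y. x \<in> K \<Longrightarrow> y \<in> K \<Longrightarrow> ip d (x - y) (x - y) \<le> D"
    and \<eta>: "\<eta> > 0"
  shows "\<exists>c\<in>vecs d. \<forall>x\<in>K. ip d (x - c) (x - c) \<le> D / 2 + \<eta>"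
proof (rule ccontr)
  define A where "A = D / 2 + \<eta>"
  assume "\<not> ?thesis"
  then have "\<forall>c. \<exists>x. x \<in> K \<and> (c \<in> vecs d \<longrightarrow> A < ip d (x - c) (x - c))"
    using K(2) by (auto simp: A_def not_le)
  then obtain f where f: "\<And>c. f c \<in> K" "\<And>c. c \<in> vecs d \<Longrightarrow> A < ip d (f c - c) (f c - c)"
    by metis
  define p where "p = (\<lambda>n. f (\<lambda>k. greedy_sum f n k / n))"
  have "D \<ge> 0"
    using diam f(1) by (metis diff_self ip_diff_left)
  then have "A \<ge> 0"
    using \<eta> by (simp add: A_def)
  have "centroid n p \<in> vecs d" for n
    using f(1) K(1) unfolding p_def centroid_greedy_sum vecs_def
    by (induction n) (auto simp: subset_iff)
  then have far: "A < ip d (p n - centroid n p) (p n - centroid n p)" for n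
    using f(2) by (simp add: p_def centroid_greedy_sum)
  have lower: "A * (n - 2 * sqrt n) \<le> scatter d n p" for n
    by (rule scatter_ge_of_far_from_centroids[OF less_imp_le[OF far] \<open>A \<ge> 0\<close>])
  have upper: "scatter d n p \<le> n * D / 2" for n
    using diam f(1) by (intro scatter_le_diameter) (simp add: p_def)
  have le: "\<eta> * n \<le> 2 * A * sqrt n" for n :: nat
  proof -
    have "n * D / 2 = A * n - \<eta> * n" "A * (n - 2 * sqrt n) = A * n - 2 * A * sqrt n"
      by (simp_all add: A_def algebra_simps)
    then show ?thesis
      using lower[of n] upper[of n] by linarith
  qed
  obtain n :: nat where "2 * A * sqrt n < \<eta> * n"
    using exists_sqrt_lt_linear[OF \<eta>, of "2 * A"] \<open>A \<ge> 0\<close> by auto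
  then show False
    using le[of n] by simp
qed

section \<open>Norming sets of normalised lattice points\<close>

definition norming :: "nat \<Rightarrow> real \<Rightarrow> (nat \<Rightarrow> real) set \<Rightarrow> bool" where
  "norming d \<rho> N \<longleftrightarrow> (\<forall>z\<in>vecs d. \<exists>v\<in>N. nrm d z \<le> \<rho> * \<bar>ip d z v\<bar>)"

lemma norming_nonempty: "norming d \<rho> N \<Longrightarrow> N \<noteq> {}"
  unfolding norming_def vecs_def by auto

lemma normingI_nonzero:
  assumes "d \<ge> 1" "\<rho> \<ge> 0"
    and nonzero: "\<And>z. z \<in> vecs d \<Longrightarrow> 0 < nrm d z \<Longrightarrow> \<exists>v\<in>N. nrm d z \<le> \<rho> * \<bar>ip d z v\<bar>"
  shows "norming d \<rho> N"
proof -
  define e where "e = (\<lambda>i :: nat. if i = 0 then 1 else 0 :: real)"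
  have "e \<in> vecs d" "nrm d e = 1"
    using assms(1) by (simp_all add: e_def vecs_def nrm_def ip_def if_distrib cong: if_cong)
  then obtain v where "v \<in> N"
    using nonzero by force
  have "\<exists>v\<in>N. nrm d z \<le> \<rho> * \<bar>ip d z v\<bar>" if "z \<in> vecs d" for z
  proof (cases "nrm d z = 0")
    case True
    then show ?thesis
      using \<open>v \<in> N\<close> \<open>\<rho> \<ge> 0\<close> by auto
  qed (use nonzero that nrm_nonneg in \<open>auto simp: order_le_less\<close>)
  then show ?thesis
    unfolding norming_def by blast
qed

lemma sum_half_power_square_le: "(\<Sum>k\<in>{-int B..int B}. (1 / 2 :: real) ^ nat (k\<^sup>2)) \<le> 4"
proof -
  have geometric: "(\<Sum>k\<in>K. (1 / 2 :: real) ^ nat (k\<^sup>2)) < 2"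
    if "inj_on (\<lambda>k. nat (k\<^sup>2)) K" "finite K" for K :: "int set"
    using geometric_sum_less[of "1 / 2" "(\<lambda>k. nat (k\<^sup>2)) ` K"] that by (simp add: sum.reindex)
  have "inj_on (\<lambda>k. nat (k\<^sup>2)) {0..int B}" "inj_on (\<lambda>k. nat (k\<^sup>2)) {-int B..<0}"
    by (auto simp: inj_on_def power2_eq_iff eq_nat_nat_iff)
  then have "(\<Sum>k\<in>{0..int B}. (1 / 2 :: real) ^ nat (k\<^sup>2)) + (\<Sum>k\<in>{-int B..<0}. (1 / 2) ^ nat (k\<^sup>2)) \<le> 4"
    using geometric by (smt (verit) finite_atLeastAtMost_int finite_atLeastLessThan_int)
  moreover have "{-int B..int B} = {0..int B} \<union> {-int B..<0}"
    by auto
  then have "(\<Sum>k\<in>{-int B..int B}. (1 / 2 :: real) ^ nat (k\<^sup>2))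
      = (\<Sum>k\<in>{0..int B}. (1 / 2) ^ nat (k\<^sup>2)) + (\<Sum>k\<in>{-int B..<0}. (1 / 2) ^ nat (k\<^sup>2))"
    by (simp only:) (rule sum.union_disjoint, auto)
  ultimately show ?thesis
    by simp
qed

lemma abs_le_power2_int: "\<bar>k :: int\<bar> \<le> k\<^sup>2"
proof (cases "k = 0")
  case False
  then have "\<bar>k\<bar> * 1 \<le> \<bar>k\<bar> * \<bar>k\<bar>"
    by (intro mult_left_mono) auto
  then show ?thesis
    by (simp add: power2_eq_square abs_mult_self_eq)
qed simp

text \<open>Each counted vector h carries weight 2^-|h|^2 \<ge> 2^-B, while the total weight of the box is
  a product of d one-dimensional theta sums, each at most 4.\<close>

lemma card_box_points_in_ball_le:
  "real (card {h \<in> PiE {..<d} (\<lambda>_. {-int B..int B}). (\<Sum>i<d. (h i)\<^sup>2) \<le> int B}) \<le> 2 ^ B * 4 ^ d"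
proof -
  define P where "P = PiE {..<d} (\<lambda>_. {-int B..int B})"
  define G where "G = {h \<in> P. (\<Sum>i<d. (h i)\<^sup>2) \<le> int B}"
  define W where "W = (\<lambda>h. \<Prod>i<d. (1 / 2 :: real) ^ nat ((h i)\<^sup>2))"
  have "finite P"
    unfolding P_def by (intro finite_PiE) auto
  have "(1 / 2) ^ B \<le> W h" if "h \<in> G" for h
  proof -
    have "int (\<Sum>i<d. nat ((h i)\<^sup>2)) = (\<Sum>i<d. (h i)\<^sup>2)"
      by simp
    also have "\<dots> \<le> int B"
      using that by (simp add: G_def)
    finally have "(\<Sum>i<d. nat ((h i)\<^sup>2)) \<le> B"
      by (simp only: of_nat_le_iff)
    then have "(1 / 2 :: real) ^ B \<le> (1 / 2) ^ (\<Sum>i<d. nat ((h i)\<^sup>2))"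
      by (simp add: power_decreasing)
    also have "\<dots> = W h"
      unfolding W_def by (simp add: power_sum)
    finally show ?thesis .
  qed
  then have "real (card G) * (1 / 2) ^ B \<le> (\<Sum>h\<in>G. W h)"
    using sum_mono[of G "\<lambda>_. (1 / 2) ^ B" W] by simp
  also have "\<dots> \<le> (\<Sum>h\<in>P. W h)"
    using \<open>finite P\<close> by (intro sum_mono2) (auto simp: G_def W_def intro: prod_nonneg)
  also have "\<dots> = (\<Prod>i<d. \<Sum>k\<in>{-int B..int B}. (1 / 2 :: real) ^ nat (k\<^sup>2))"
    unfolding W_def P_def by (rule prod_sum_PiE[symmetric]) auto
  also have "\<dots> = (\<Sum>k\<in>{-int B..int B}. (1 / 2 :: real) ^ nat (k\<^sup>2)) ^ d"
    by simp
  also have "\<dots> \<le> 4 ^ d"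
    by (intro power_mono sum_half_power_square_le sum_nonneg) auto
  finally show ?thesis
    unfolding G_def P_def by (simp add: field_simps)
qed

definition lattice_ball :: "nat \<Rightarrow> nat \<Rightarrow> (nat \<Rightarrow> int) set" where
  "lattice_ball d B = {g. (\<forall>i\<ge>d. g i = 0) \<and> (\<Sum>i<d. (g i)\<^sup>2) \<le> int B}"

lemma lattice_ball_coord_le:
  assumes "g \<in> lattice_ball d B" "i < d"
  shows "\<bar>g i\<bar> \<le> int B"
proof -
  have "\<bar>g i\<bar> \<le> (g i)\<^sup>2"
    by (rule abs_le_power2_int)
  also have "\<dots> \<le> (\<Sum>i<d. (g i)\<^sup>2)"
    using assms(2) by (intro member_le_sum) auto
  finally show ?thesis
    using assms(1) by (simp add: lattice_ball_def)
qed

lemma card_lattice_ball_le: "finite (lattice_ball d B) \<and> real (card (lattice_ball d B)) \<le> 2 ^ B * 4 ^ d"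
proof -
  define G where "G = {h \<in> PiE {..<d} (\<lambda>_. {-int B..int B}). (\<Sum>i<d. (h i)\<^sup>2) \<le> int B}"
  have "finite (PiE {..<d} (\<lambda>_. {-int B..int B}))"
    by (intro finite_PiE) auto
  then have "finite G"
    unfolding G_def by simp
  have inj: "inj_on (\<lambda>g. restrict g {..<d}) (lattice_ball d B)"
  proof (rule inj_onI, rule ext)
    fix g g' i
    assume g: "g \<in> lattice_ball d B" "g' \<in> lattice_ball d B"
      and eq: "restrict g {..<d} = restrict g' {..<d}"
    show "g i = g' i"
    proof (cases "i < d")
      case True
      then show ?thesis
        using fun_cong[OF eq, of i] by simp
    next
      case False
      then show ?thesis
        using g by (simp add: lattice_ball_def)
    qed
  qed
  have sub: "(\<lambda>g. restrict g {..<d}) ` lattice_ball d B \<subseteq> G"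
  proof safe
    fix g assume g: "g \<in> lattice_ball d B"
    have "g i \<in> {-int B..int B}" if "i < d" for i
      using lattice_ball_coord_le[OF g that] by (simp add: abs_le_iff)
    then have "restrict g {..<d} \<in> PiE {..<d} (\<lambda>_. {-int B..int B})"
      by (simp add: restrict_PiE_iff)
    then show "restrict g {..<d} \<in> G"
      using g by (simp add: G_def lattice_ball_def)
  qed
  have "finite (lattice_ball d B)"
    using finite_subset[OF sub \<open>finite G\<close>] inj by (rule finite_imageD)
  moreover have "card (lattice_ball d B) \<le> card G"
    using inj sub \<open>finite G\<close> by (rule card_inj_on_le)
  ultimately show ?thesis
    using card_box_points_in_ball_le[of d B] unfolding G_def by linarith
qed

lemma nrm_round_diff_le: "nrm d ((\<lambda>i. of_int (round (y i))) - y) \<le> sqrt d / 2"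
proof -
  have "ip d ((\<lambda>i. of_int (round (y i))) - y) ((\<lambda>i. of_int (round (y i))) - y) \<le> (\<Sum>i<d. (1 / 2)\<^sup>2)"
    unfolding ip_self_eq_sum_squares
  proof (rule sum_mono)
    fix i
    have "\<bar>((\<lambda>i. of_int (round (y i))) - y) i\<bar> \<le> \<bar>1 / 2\<bar>"
      using of_int_round_abs_le[of "y i"] by simp
    then show "(((\<lambda>i. of_int (round (y i))) - y) i)\<^sup>2 \<le> (1 / 2)\<^sup>2"
      by (simp only: abs_le_square_iff)
  qed
  also have "\<dots> = (sqrt d / 2)\<^sup>2"
    by (simp add: power_divide)
  finally show ?thesis
    by (subst nrm_le_iff_ip_self_le) auto
qed

lemma lattice_ballI:
  assumes "\<forall>i\<ge>d. g i = 0" and "ip d (\<lambda>i. of_int (g i)) (\<lambda>i. of_int (g i)) \<le> real B"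
  shows "g \<in> lattice_ball d B"
proof -
  have "real_of_int (\<Sum>i<d. (g i)\<^sup>2) \<le> real_of_int (int B)"
    using assms(2) by (simp add: ip_self_eq_sum_squares)
  then show ?thesis
    using assms(1) unfolding lattice_ball_def by (simp only: of_int_le_iff mem_Collect_eq simp_thms)
qed

text \<open>Rounding the rescaled vector y = m sqrt d z / |z| coordinatewise moves it by at most
  r = sqrt d / 2, so the norming ratio (|y| + r) / (|y| - r) becomes (2 m + 1) / (2 m - 1).\<close>

lemma exists_lattice_point_norming:
  fixes m :: nat
  assumes m: "m \<ge> 1" and z: "z \<in> vecs d" "nrm d z > 0"
  shows "\<exists>g\<in>lattice_ball d ((m + 1)\<^sup>2 * d). 0 < nrm d (\<lambda>i. of_int (g i))
    \<and> nrm d z * nrm d (\<lambda>i. of_int (g i)) \<le> (2 * real m + 1) / (2 * real m - 1) * ip d z (\<lambda>i. of_int (g i))"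
proof -
  have "d > 0"
    using z(2) by (cases "d = 0") (auto simp: nrm_def ip_def)
  define t where "t = m * sqrt d / nrm d z"
  define y where "y = (\<lambda>i. t * z i)"
  define g where "g = (\<lambda>i. round (y i))"
  define gr where "gr = (\<lambda>i. real_of_int (g i))"
  define r where "r = sqrt d / 2"
  have "t > 0"
    using m \<open>d > 0\<close> z(2) by (simp add: t_def)
  have ny: "nrm d y = m * sqrt d"
    unfolding y_def nrm_scale using \<open>t > 0\<close> z(2) by (simp add: t_def)
  have close: "nrm d (gr - y) \<le> r"
    unfolding gr_def g_def r_def by (rule nrm_round_diff_le)
  have r: "0 \<le> r" "r < nrm d y"
    using m \<open>d > 0\<close> by (simp_all add: ny r_def)
  have "(nrm d y + r) / (nrm d y - r) = ((2 * real m + 1) * (sqrt d / 2)) / ((2 * real m - 1) * (sqrt d / 2))"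
    by (simp add: ny r_def algebra_simps)
  also have "\<dots> = (2 * real m + 1) / (2 * real m - 1)"
    using \<open>d > 0\<close> by (intro nonzero_mult_divide_mult_cancel_right) simp
  finally have rho: "(nrm d y + r) / (nrm d y - r) = (2 * real m + 1) / (2 * real m - 1)" .
  have "t * (nrm d z * nrm d gr) = nrm d y * nrm d gr"
    unfolding y_def nrm_scale using \<open>t > 0\<close> by simp
  also have "\<dots> \<le> (2 * real m + 1) / (2 * real m - 1) * ip d y gr"
    using norming_ratio_of_close(2)[OF close r] by (simp only: rho)
  also have "\<dots> = t * ((2 * real m + 1) / (2 * real m - 1) * ip d z gr)"
    unfolding y_def ip_scale_left by simp
  finally have "nrm d z * nrm d gr \<le> (2 * real m + 1) / (2 * real m - 1) * ip d z gr"
    using \<open>t > 0\<close> by (rule mult_left_le_imp_le)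
  moreover have "0 < nrm d gr"
    using norming_ratio_of_close(1)[OF close r] by (rule nrm_pos_of_ip_pos)
  moreover have "g \<in> lattice_ball d ((m + 1)\<^sup>2 * d)"
  proof (rule lattice_ballI)
    show "\<forall>i\<ge>d. g i = 0"
      using z(1) by (simp add: g_def y_def vecs_def)
    have "nrm d gr \<le> (m + 1 / 2) * sqrt d"
      using nrm_le_of_close[OF close] by (simp add: ny r_def algebra_simps)
    then have "ip d gr gr \<le> (m + 1 / 2)\<^sup>2 * d"
      by (simp add: nrm_le_iff_ip_self_le power_mult_distrib)
    also have "\<dots> \<le> real ((m + 1)\<^sup>2 * d)"
      by (simp add: mult_right_mono power_mono)
    finally show "ip d (\<lambda>i. of_int (g i)) (\<lambda>i. of_int (g i)) \<le> real ((m + 1)\<^sup>2 * d)"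
      by (simp add: gr_def)
  qed
  ultimately show ?thesis
    unfolding gr_def by blast
qed

lemma exists_norming_net:
  fixes m :: nat
  assumes m: "m \<ge> 1" and d: "d \<ge> 1"
  shows "\<exists>N. finite N \<and> N \<subseteq> usphere d \<and> real (card N) \<le> (2 ^ (m + 1)\<^sup>2 * 4) ^ d
    \<and> norming d ((2 * real m + 1) / (2 * real m - 1)) N"
proof -
  define \<rho> where "\<rho> = (2 * real m + 1) / (2 * real m - 1)"
  define B where "B = (m + 1)\<^sup>2 * d"
  define gr where "gr = (\<lambda>(g :: nat \<Rightarrow> int) i. real_of_int (g i))"
  define G where "G = {g \<in> lattice_ball d B. 0 < nrm d (gr g)}"
  define N where "N = (\<lambda>g i. (1 / nrm d (gr g)) * gr g i) ` G"
  have "finite G" "card G \<le> card (lattice_ball d B)"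
    using card_lattice_ball_le[of d B] by (auto simp: G_def intro: card_mono)
  then have "finite N" "real (card N) \<le> 2 ^ B * 4 ^ d"
    using card_lattice_ball_le[of d B] card_image_le[of G] unfolding N_def
    by (auto intro: order_trans[OF of_nat_mono])
  moreover have "(2 :: real) ^ B * 4 ^ d = (2 ^ (m + 1)\<^sup>2 * 4) ^ d"
    by (simp add: B_def power_mult power_mult_distrib)
  moreover have "N \<subseteq> usphere d"
  proof
    fix v assume "v \<in> N"
    then obtain g where g: "g \<in> G" and v: "v = (\<lambda>i. (1 / nrm d (gr g)) * gr g i)"
      unfolding N_def by blast
    have "gr g \<in> vecs d" "0 < nrm d (gr g)"
      using g by (simp_all add: G_def lattice_ball_def gr_def vecs_def)
    then show "v \<in> usphere d"
      unfolding v by (rule normalize_in_usphere)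
  qed
  moreover have "norming d \<rho> N"
  proof (rule normingI_nonzero)
    fix z assume z: "z \<in> vecs d" "0 < nrm d z"
    obtain g where g: "g \<in> lattice_ball d B" "0 < nrm d (gr g)"
      and ratio: "nrm d z * nrm d (gr g) \<le> \<rho> * ip d z (gr g)"
      using exists_lattice_point_norming[OF m z] unfolding B_def gr_def \<rho>_def by blast
    have "nrm d z \<le> \<rho> * ip d z (\<lambda>i. (1 / nrm d (gr g)) * gr g i)"
      unfolding ip_scale_right using ratio g(2) by (simp add: field_simps)
    also have "\<dots> \<le> \<rho> * \<bar>ip d z (\<lambda>i. (1 / nrm d (gr g)) * gr g i)\<bar>"
      using m by (intro mult_left_mono) (auto simp: \<rho>_def)
    finally show "\<exists>v\<in>N. nrm d z \<le> \<rho> * \<bar>ip d z v\<bar>"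
      using g unfolding N_def G_def by blast
  qed (use m d in \<open>auto simp: \<rho>_def\<close>)
  ultimately show ?thesis
    unfolding \<rho>_def by auto
qed

section \<open>Upper bound from a norming set\<close>

text \<open>Two secrets consistent with the same answers to a \<rho>-norming list of queries are at
  distance at most 2 \<rho> \<delta>, so the approximate Jung theorem yields a good output.\<close>

lemma exists_center_of_consistent_secrets:
  assumes norming: "norming d \<rho> (set ns)" and "\<rho> \<ge> 0" and "\<eta> > 0"
  shows "\<exists>c\<in>vecs d. \<forall>x\<in>vecs d. (\<forall>t<length ns. \<bar>rs ! t - ip d x (ns ! t)\<bar> \<le> \<delta>)
    \<longrightarrow> ip d (x - c) (x - c) \<le> 2 * (\<rho> * \<delta>)\<^sup>2 + \<eta>"
proof -
  define K where "K = {x \<in> vecs d. \<forall>t<length ns. \<bar>rs ! t - ip d x (ns ! t)\<bar> \<le> \<delta>}"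
  have diam: "ip d (x - y) (x - y) \<le> (2 * \<rho> * \<delta>)\<^sup>2" if "x \<in> K" "y \<in> K" for x y
  proof -
    obtain v where "v \<in> set ns" and v: "nrm d (x - y) \<le> \<rho> * \<bar>ip d (x - y) v\<bar>"
      using norming vecs_diff \<open>x \<in> K\<close> \<open>y \<in> K\<close> unfolding norming_def K_def by blast
    then obtain t where "t < length ns" "v = ns ! t"
      by (auto simp: in_set_conv_nth)
    then have "\<bar>ip d (x - y) v\<bar> \<le> 2 * \<delta>"
      using that unfolding K_def by (force simp: ip_diff_left)
    then have "\<rho> * \<bar>ip d (x - y) v\<bar> \<le> \<rho> * (2 * \<delta>)"
      using \<open>\<rho> \<ge> 0\<close> by (rule mult_left_mono)
    then have "nrm d (x - y) \<le> 2 * \<rho> * \<delta>"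
      using v by simp
    moreover have "0 \<le> 2 * \<rho> * \<delta>"
      using calculation nrm_nonneg order_trans by blast
    ultimately show ?thesis
      using nrm_le_iff_ip_self_le by blast
  qed
  show ?thesis
  proof (cases "K = {}")
    case True
    have "(\<lambda>i. 0) \<in> vecs d"
      by (simp add: vecs_def)
    with True show ?thesis
      unfolding K_def by blast
  next
    case False
    moreover have "(2 * \<rho> * \<delta>)\<^sup>2 / 2 + \<eta> = 2 * (\<rho> * \<delta>)\<^sup>2 + \<eta>"
      by (simp add: power_mult_distrib)
    ultimately show ?thesis
      using exists_approx_center[of K d "(2 * \<rho> * \<delta>)\<^sup>2" \<eta>] diam \<open>\<eta> > 0\<close>
      by (auto simp: K_def)
  qed
qed

text \<open>The reconstructor asks the vectors of the norming set one after another and outputs an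
  approximate center of the secrets consistent with the answers.\<close>

lemma OPT_le_of_norming_queries:
  assumes ns: "set ns \<subseteq> usphere d" "length ns \<le> T" and norming: "norming d \<rho> (set ns)"
    and "\<rho> \<ge> 0" "\<eta> > 0"
  shows "OPT d T \<delta> \<le> ereal (sqrt (2 * (\<rho> * \<delta>)\<^sup>2 + \<eta>))"
proof -
  define R2 where "R2 = 2 * (\<rho> * \<delta>)\<^sup>2 + \<eta>"
  define q where "q = (\<lambda>rs :: real list. if length rs < length ns then ns ! length rs else hd ns)"
  define good where "good = (\<lambda>rs c. c \<in> vecs d \<and> (\<forall>x\<in>vecs d.
    (\<forall>t<length ns. \<bar>rs ! t - ip d x (ns ! t)\<bar> \<le> \<delta>) \<longrightarrow> ip d (x - c) (x - c) \<le> R2))"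
  define out where "out = (\<lambda>rs. SOME c. good rs c)"
  have "\<exists>c. good rs c" for rs
    using exists_center_of_consistent_secrets[OF norming \<open>\<rho> \<ge> 0\<close> \<open>\<eta> > 0\<close>]
    unfolding good_def R2_def by blast
  then have good_out: "good rs (out rs)" for rs
    unfolding out_def by (rule someI_ex)
  have "ns \<noteq> []"
    using norming_nonempty[OF norming] by auto
  then have "valid_recon d q out"
    using good_out ns(1) by (auto simp: valid_recon_def good_def q_def)
  then have "OPT d T \<delta> \<le> err d T \<delta> q out"
    by (rule OPT_le_err)
  also have "\<dots> \<le> ereal (sqrt R2)"
  proof (rule err_leI)
    fix x rs assume x: "x \<in> vecs d" and rs: "consistent d T \<delta> q x rs"
    have "\<bar>rs ! t - ip d x (ns ! t)\<bar> \<le> \<delta>" if "t < length ns" for t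
    proof -
      have "t < T" "q (take t rs) = ns ! t"
        using rs that ns(2) by (auto simp: consistent_def q_def)
      then show ?thesis
        using rs by (auto simp: consistent_def)
    qed
    then have "ip d (x - out rs) (x - out rs) \<le> R2"
      using good_out[of rs] x by (auto simp: good_def)
    then show "nrm d (out rs - x) \<le> sqrt R2"
      by (simp add: nrm_def ip_diff_self_commute)
  qed
  finally show ?thesis
    unfolding R2_def .
qed

lemma OPT_le_of_norming:
  assumes N: "finite N" "N \<subseteq> usphere d" "card N \<le> T" and norming: "norming d \<rho> N"
    and "\<rho> \<ge> 0" "\<delta> \<ge> 0"
  shows "OPT d T \<delta> \<le> ereal (sqrt 2 * \<rho> * \<delta>)"
proof (rule ereal_le_epsilon2)
  fix e :: real assume "e > 0"
  obtain ns where ns: "set ns = N" "distinct ns"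
    using finite_distinct_list[OF N(1)] by blast
  then have "OPT d T \<delta> \<le> ereal (sqrt (2 * (\<rho> * \<delta>)\<^sup>2 + e\<^sup>2))"
    using N norming \<open>\<rho> \<ge> 0\<close> \<open>e > 0\<close> by (intro OPT_le_of_norming_queries) (auto simp: distinct_card)
  also have "sqrt (2 * (\<rho> * \<delta>)\<^sup>2 + e\<^sup>2) \<le> sqrt (2 * (\<rho> * \<delta>)\<^sup>2) + sqrt (e\<^sup>2)"
    by (rule sqrt_add_le_add_sqrt) auto
  also have "\<dots> = sqrt 2 * \<rho> * \<delta> + e"
    using \<open>\<rho> \<ge> 0\<close> \<open>\<delta> \<ge> 0\<close> \<open>e > 0\<close> by (simp add: real_sqrt_mult)
  finally show "OPT d T \<delta> \<le> ereal (sqrt 2 * \<rho> * \<delta>) + ereal e"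
    by simp
qed

lemma OPT_le_of_large_budget:
  fixes m :: nat
  assumes m: "m \<ge> 1" and d: "d \<ge> 1" and "\<delta> \<ge> 0" and T: "(2 ^ (m + 1)\<^sup>2 * 4) ^ d \<le> real T"
  shows "OPT d T \<delta> \<le> ereal (sqrt 2 * ((2 * real m + 1) / (2 * real m - 1)) * \<delta>)"
proof -
  obtain N where N: "finite N" "N \<subseteq> usphere d" "real (card N) \<le> (2 ^ (m + 1)\<^sup>2 * 4) ^ d"
    and norming: "norming d ((2 * real m + 1) / (2 * real m - 1)) N"
    using exists_norming_net[OF m d] by blast
  have "card N \<le> T"
    using N(3) T by linarith
  moreover have "(2 * real m + 1) / (2 * real m - 1) \<ge> 0"
    using m by simp
  ultimately show ?thesis
    using N norming \<open>\<delta> \<ge> 0\<close> by (intro OPT_le_of_norming)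
qed

section \<open>Asymptotics of the excess error\<close>

lemma OPT_inf_bounds:
  assumes d: "d \<ge> 1" and \<delta>: "\<delta> > 0"
  obtains y where "OPT_inf d \<delta> = ereal y" "sqrt 2 * \<delta> * sqrt (1 - 1 / d) \<le> y" "y \<le> 3 * sqrt 2 * \<delta>"
proof -
  have "OPT_inf d \<delta> \<le> OPT d (64 ^ d) \<delta>"
    by (rule OPT_inf_le_OPT)
  also have "\<dots> \<le> ereal (sqrt 2 * ((2 * real 1 + 1) / (2 * real 1 - 1)) * \<delta>)"
  proof (rule OPT_le_of_large_budget)
    have "(2 ^ (1 + 1)\<^sup>2 * 4 :: real) = 64"
      by (simp only: one_add_one) simp
    then show "(2 ^ (1 + 1)\<^sup>2 * 4) ^ d \<le> real (64 ^ d)"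
      by simp
  qed (use d \<delta> in auto)
  finally have upper: "OPT_inf d \<delta> \<le> ereal (3 * sqrt 2 * \<delta>)"
    by (simp add: mult.commute)
  have "sqrt (2 * \<delta>\<^sup>2 * (1 - 1 / d)) = sqrt 2 * \<delta> * sqrt (1 - 1 / d)"
    using \<delta> by (simp add: real_sqrt_mult)
  then have lower: "ereal (sqrt 2 * \<delta> * sqrt (1 - 1 / d)) \<le> OPT_inf d \<delta>"
    using OPT_ge_simplex[OF d \<delta>] by (intro OPT_inf_geI) simp
  show ?thesis
    using that upper lower by (cases "OPT_inf d \<delta>") auto
qed

lemma ExcessErr_nonneg:
  assumes "d \<ge> 1" "\<delta> > 0"
  shows "0 \<le> ExcessErr d T \<delta>"
proof -
  obtain y where y: "OPT_inf d \<delta> = ereal y"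
    using OPT_inf_bounds[OF assms] .
  then have "ereal y \<le> OPT d T \<delta>"
    using OPT_inf_le_OPT by metis
  then show ?thesis
    unfolding ExcessErr_def y by (cases "OPT d T \<delta>") auto
qed

lemma ExcessErr_ge_few_queries:
  assumes d: "d \<ge> 1" and \<delta>: "\<delta> > 0" and T: "T \<ge> 1"
  shows "ereal (\<delta> * sqrt (d / (2 * ln (2 * real T) + 2)) - 3 * sqrt 2 * \<delta>) \<le> ExcessErr d T \<delta>"
proof -
  obtain y where y: "OPT_inf d \<delta> = ereal y" "y \<le> 3 * sqrt 2 * \<delta>"
    using OPT_inf_bounds[OF d \<delta>] by blast
  have "ereal (\<delta> * sqrt (d / (2 * ln (2 * real T) + 2))) \<le> OPT d T \<delta>"
    using d \<delta> T by (rule OPT_ge_few_queries)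
  then show ?thesis
    unfolding ExcessErr_def y(1) using y(2) by (cases "OPT d T \<delta>") auto
qed

lemma ExcessErr_le_large_budget:
  fixes m :: nat
  assumes m: "m \<ge> 1" and d: "d \<ge> 1" and \<delta>: "\<delta> > 0" and T: "(2 ^ (m + 1)\<^sup>2 * 4) ^ d \<le> real T"
  shows "ExcessErr d T \<delta> \<le> ereal (sqrt 2 * \<delta> * ((2 * real m + 1) / (2 * real m - 1) - sqrt (1 - 1 / d)))"
proof -
  obtain y where y: "OPT_inf d \<delta> = ereal y" "sqrt 2 * \<delta> * sqrt (1 - 1 / d) \<le> y"
    using OPT_inf_bounds[OF d \<delta>] by blast
  have "OPT d T \<delta> \<le> ereal (sqrt 2 * ((2 * real m + 1) / (2 * real m - 1)) * \<delta>)"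
    using m d \<delta> T by (intro OPT_le_of_large_budget) auto
  then show ?thesis
    unfolding ExcessErr_def y(1) using y(2) by (cases "OPT d T \<delta>") (auto simp: algebra_simps)
qed

lemma filterlim_dim_over_log_budget:
  assumes T: "\<And>d. T d \<ge> 1" and small: "(\<lambda>d. ln (real (T d))) \<in> o(\<lambda>d. real d)"
  shows "filterlim (\<lambda>d. real d / (2 * ln (2 * real (T d)) + 2)) at_top sequentially"
proof -
  define h where "h = (\<lambda>d. (2 * ln (2 * real (T d)) + 2) / real d)"
  have "h = (\<lambda>d. 2 * (ln (real (T d)) / real d) + (2 * ln 2 + 2) / real d)"
  proof
    fix d
    have "ln (2 * real (T d)) = ln 2 + ln (real (T d))"
      using T[of d] by (simp add: ln_mult)
    then show "h d = 2 * (ln (real (T d)) / real d) + (2 * ln 2 + 2) / real d"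
      by (simp add: h_def add_divide_distrib[symmetric])
  qed
  moreover have "(\<lambda>d. 2 * (ln (real (T d)) / real d) + (2 * ln 2 + 2) / real d) \<longlonglongrightarrow> 2 * 0 + 0"
    by (intro tendsto_intros smalloD_tendsto[OF small])
  ultimately have "h \<longlonglongrightarrow> 0"
    by simp
  moreover have "eventually (\<lambda>d. 0 < h d) sequentially"
    using eventually_gt_at_top[of "0 :: nat"]
  proof eventually_elim
    case (elim d)
    have "0 \<le> ln (2 * real (T d))"
      using T[of d] by simp
    then show ?case
      using elim by (simp add: h_def)
  qed
  ultimately have "filterlim (\<lambda>d. inverse (h d)) at_top sequentially"
    by (rule filterlim_inverse_at_top)
  then show ?thesis
    by (simp add: h_def)
qed

lemma ExcessErr_tendsto_infinity:
  assumes \<delta>: "\<delta> > 0" and T: "\<And>d. T d \<ge> 1"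
    and small: "(\<lambda>d. ln (real (T d))) \<in> o(\<lambda>d. real d)"
  shows "((\<lambda>d. ExcessErr d (T d) \<delta>) \<longlongrightarrow> \<infinity>) sequentially"
proof -
  have "filterlim (\<lambda>d. \<delta> * sqrt (d / (2 * ln (2 * real (T d)) + 2))) at_top sequentially"
    by (intro filterlim_tendsto_pos_mult_at_top[OF tendsto_const \<delta>] filterlim_compose[OF sqrt_at_top]
        filterlim_dim_over_log_budget[OF T small])
  then have far: "eventually (\<lambda>d. r + 3 * sqrt 2 * \<delta> < \<delta> * sqrt (d / (2 * ln (2 * real (T d)) + 2)))
      sequentially" for r
    by (simp add: filterlim_at_top_dense)
  show ?thesis
    unfolding tendsto_PInfty
  proof
    fix r
    show "eventually (\<lambda>d. ereal r < ExcessErr d (T d) \<delta>) sequentially"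
      using far[of r] eventually_ge_at_top[of "1 :: nat"]
    proof eventually_elim
      case (elim d)
      then have "ereal r < ereal (\<delta> * sqrt (d / (2 * ln (2 * real (T d)) + 2)) - 3 * sqrt 2 * \<delta>)"
        by simp
      also have "\<dots> \<le> ExcessErr d (T d) \<delta>"
        using elim \<delta> T by (intro ExcessErr_ge_few_queries)
      finally show ?case .
    qed
  qed
qed

lemma eventually_power_le_of_ln_ratio:
  fixes f :: "nat \<Rightarrow> real"
  assumes lim: "filterlim (\<lambda>d. ln (f d) / real d) at_top sequentially"
    and f: "\<And>d. f d > 0" and "K > 0"
  shows "eventually (\<lambda>d. K ^ d \<le> f d) sequentially"
  using lim[unfolded filterlim_at_top, rule_format, of "ln K"] eventually_gt_at_top[of "0 :: nat"]
proof eventually_elim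
  case (elim d)
  then have "ln (K ^ d) \<le> ln (f d)"
    using \<open>K > 0\<close> by (simp add: ln_realpow pos_le_divide_eq mult.commute)
  then show ?case
    using \<open>K > 0\<close> f by simp
qed

text \<open>The net resolution m is fixed first, so that sqrt 2 \<delta> (\<rho>_m - 1) < b; only then is d taken
  large enough for the budget T d to pay for the net.\<close>

lemma ExcessErr_tendsto_zero:
  assumes \<delta>: "\<delta> > 0" and T: "\<And>d. T d \<ge> 1"
    and large: "filterlim (\<lambda>d. ln (real (T d)) / real d) at_top sequentially"
  shows "((\<lambda>d. ExcessErr d (T d) \<delta>) \<longlongrightarrow> 0) sequentially"
proof (rule order_tendstoI)
  fix a :: ereal assume "a < 0"
  show "eventually (\<lambda>d. a < ExcessErr d (T d) \<delta>) sequentially"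
    using eventually_ge_at_top[of "1 :: nat"]
    by eventually_elim (use ExcessErr_nonneg \<delta> \<open>a < 0\<close> in \<open>blast intro: less_le_trans\<close>)
next
  fix b :: ereal assume "0 < b"
  define \<rho> where "\<rho> = (\<lambda>m :: nat. (2 * real m + 1) / (2 * real m - 1))"
  have "\<rho> \<longlonglongrightarrow> 1"
    unfolding \<rho>_def by real_asymp
  then have "(\<lambda>m. sqrt 2 * \<delta> * (\<rho> m - 1)) \<longlonglongrightarrow> sqrt 2 * \<delta> * (1 - 1)"
    by (intro tendsto_intros)
  then have "eventually (\<lambda>m. 1 \<le> m \<and> ereal (sqrt 2 * \<delta> * (\<rho> m - 1)) < b) sequentially"
    using \<open>0 < b\<close> by (intro eventually_conj eventually_ge_at_top order_tendstoD(2)[OF tendsto_ereal])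
      (auto simp flip: zero_ereal_def)
  then obtain m where m: "1 \<le> m" "ereal (sqrt 2 * \<delta> * (\<rho> m - 1)) < b"
    unfolding eventually_sequentially by (meson order_refl)
  have "(\<lambda>d. sqrt (1 - 1 / real d)) \<longlonglongrightarrow> 1"
    by real_asymp
  then have "(\<lambda>d. sqrt 2 * \<delta> * (\<rho> m - sqrt (1 - 1 / real d))) \<longlonglongrightarrow> sqrt 2 * \<delta> * (\<rho> m - 1)"
    by (intro tendsto_intros)
  then have "eventually (\<lambda>d. ereal (sqrt 2 * \<delta> * (\<rho> m - sqrt (1 - 1 / real d))) < b) sequentially"
    using m(2) by (intro order_tendstoD(2)[OF tendsto_ereal])
  moreover have "eventually (\<lambda>d. (2 ^ (m + 1)\<^sup>2 * 4) ^ d \<le> real (T d)) sequentially"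
    using T by (intro eventually_power_le_of_ln_ratio[OF large]) (auto simp: Suc_le_eq)
  ultimately show "eventually (\<lambda>d. ExcessErr d (T d) \<delta> < b) sequentially"
    using eventually_ge_at_top[of "1 :: nat"]
  proof eventually_elim
    case (elim d)
    then have "ExcessErr d (T d) \<delta> \<le> ereal (sqrt 2 * \<delta> * (\<rho> m - sqrt (1 - 1 / real d)))"
      unfolding \<rho>_def using m(1) \<delta> by (intro ExcessErr_le_large_budget)
    then show ?case
      using elim(1) by (rule le_less_trans)
  qed
qed

theorem theorem3:
  fixes \<delta> :: real and T :: "nat \<Rightarrow> nat"
  assumes "\<delta> > 0" and "\<And>d. T d \<ge> 1"
  shows "((\<lambda>d. ln (real (T d))) \<in> o(\<lambda>d. real d) \<longrightarrow>
            ((\<lambda>d. ExcessErr d (T d) \<delta>) \<longlongrightarrow> \<infinity>) sequentially)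
       \<and> (filterlim (\<lambda>d. ln (real (T d)) / real d) at_top sequentially \<longrightarrow>
            ((\<lambda>d. ExcessErr d (T d) \<delta>) \<longlongrightarrow> 0) sequentially)"
proof (intro conjI impI)
  assume "(\<lambda>d. ln (real (T d))) \<in> o(\<lambda>d. real d)"
  with assms show "((\<lambda>d. ExcessErr d (T d) \<delta>) \<longlongrightarrow> \<infinity>) sequentially"
    by (rule ExcessErr_tendsto_infinity)
next
  assume "filterlim (\<lambda>d. ln (real (T d)) / real d) at_top sequentially"
  with assms show "((\<lambda>d. ExcessErr d (T d) \<delta>) \<longlongrightarrow> 0) sequentially"
    by (rule ExcessErr_tendsto_zero)
qed

end
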